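(* Let $\lambda=(\lambda_{m,s})_{m\in[M],s\in[S]}\in\Lambda$. Consider any scheduling policy (possibly using knowledge of arrival statistics, past and future arrivals, and past configurations) that at each slot $t$ chooses job service configurations $N^l(t)\in\mathcal N^l$ for all $l\in[L]$ and keeps the system stable, i.e. $\lim_{t\to\infty}\sum_{m,s}\mathbb E[Q_{m,s}(t)]<\infty$. Then its long-run average cost satisfies $$\liminf_{T\to\infty}\frac1T\sum_{t=1}^{T}\mathbb E\Big[\sum_{l\in[L]}\big(V\,C_1^l(N^l(t))+U\,C_2^l(N^l(t-1),N^l(t))\big)\Big]\ \ge\ C_{\mathrm{opt}}(\lambda),$$ where $C_{\mathrm{opt}}(\lambda)$ is the optimal value of $$\min_{(\lambda^l)_{l},\,P,\,\pi}\ \sum_{l\in[L]}\Big(V\,C^l_{\pi^l,1}+U\,C^l_{P^l,\pi^l,2}\Big)$$ subject to: $\lambda^l=(\lambda^l_{m,s})$ nonnegative with $\sum_l\lambda^l=\lambda$; for each $l$, $\pi^l$ is a probability distribution on $\mathcal N^l$ and $P^l$ is a stochastic matrix indexed by $\mathcal N^l\times\mathcal N^l$ with $\pi^lP^l=\pi^l$; and $\sum_s s\lambda^l_{m,s}\le\sum_{N\in\mathcal N^l}\pi^l_N\sum_s N_{m,s}$ for all $l,m$. Here $$C^l_{\pi^l,1}=\sum_{N\in\mathcal N^l}\pi^l_N\Big(c_0\mathbb 1_{\{N\neq0\}}+\sum_m c_m\sum_s N_{m,s}\Big),\qquad C^l_{P^l,\pi^l,2}=\sum_{N\in\mathcal N^l}\pi^l_N\sum_{N'\in\mathcal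 N^l}P^l_{N,N'}\sum_{m,\,s\ge2}\big[N_{m,s}-N'_{m,s-1}\big]^+.$$
   Context: Cloud system: $L$ servers, $M$ VM types, $K$ resource types. Server $l$ has $C_{l,k}$ units of resource $k$; a type-$m$ VM needs $R_{m,k}$ units of resource $k$. $\mathcal W^l=\{\eta\in\mathbb Z_{\ge0}^M:\sum_m\eta_mR_{m,k}\le C_{l,k}\ \forall k\}$ is the set of feasible VM configurations at server $l$. Time is slotted. A type-$(m,s)$ job requires a type-$m$ VM for $s$ slots, $s\in[S]$ ($S$ = maximum job size). A job service configuration at server $l$ is a matrix $N=(N_{m,s})_{m\in[M],s\in[S]}$ of nonnegative integers ($N_{m,s}$ = number of VMs given to type-$(m,s)$ jobs) with $(\sum_sN_{m,s})_m\in\mathcal W^l$; $\mathcal N^l$ is the set of these. $A_{m,s}(t)$ = number of type-$(m,s)$ arrivals in slot $t$; these are i.i.d. across slots, bounded by $A_{\max}$, with $\mathbb E[A_{m,s}(t)]=\lambda_{m,s}$ and $\Pr(A_{m,s}(t)=0)>0$. $Q_{m,s}(t)$ = number of type-$(m,s)$ jobs in the system; a type-$(m,s)$ job served in slot $t$ becomes a type-$(m,s-1)$ job at $t+1$ (and leaves if $s=1$). Capacity region: $\Lambda$ is the set of $\lambda$ such that for every $l$ there are $\beta^l_W\ge0$, $W\in\mathcal W^l$, $\sum_{W}\beta^l_W=1$, with $\sum_s s\lambda_{m,s}=\sum_l\sum_{W\in\mathcal W^l}\beta^l_WW_m$ for all $m$. Costs: given constants $c_0\ge0$ (static power) and $c_m\ge0$,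 the server running cost is $C_1^l(N)=c_0\mathbb 1_{\{N\ne0\}}+\sum_m c_m\sum_sN_{m,s}$; the (online) job migration cost is $C_2^l(N,N')=\sum_{m}\sum_{s\ge2}(N_{m,s}-N'_{m,s-1})^+$ for consecutive configurations $N$ (slot $t-1$) and $N'$ (slot $t$). $U,V\ge0$ are weighting parameters. *)

theory Defs
  imports "HOL-Probability.Probability"
begin

text \<open>VM types are indexed by m in {..<M}, resource types by k in {..<K},
servers by l in {..<L}, job sizes by s in {1..S}. A VM configuration is a function
nat => nat (zero outside {..<M}); a job service configuration is a function
nat => nat => nat, N m s, zero outside {..<M} x {1..S}.\<close>

type_synonym vmconf = "nat \<Rightarrow> nat"
type_synonym jobconf = "nat \<Rightarrow> nat \<Rightarrow> nat"

definition Wset :: "nat \<Rightarrow> nat \<Rightarrow> (nat \<Rightarrow> nat \<Rightarrow> real) \<Rightarrow> (nat \<Rightarrow> nat \<Rightarrow> real) \<Rightarrow> nat \<Rightarrow> vmconf set" where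
  "Wset M K R C l = {\<eta>. (\<forall>m. M \<le> m \<longrightarrow> \<eta> m = 0) \<and>
      (\<forall>k<K. (\<Sum>m<M. real (\<eta> m) * R m k) \<le> C l k)}"

definition Nset :: "nat \<Rightarrow> nat \<Rightarrow> nat \<Rightarrow> (nat \<Rightarrow> nat \<Rightarrow> real) \<Rightarrow> (nat \<Rightarrow> nat \<Rightarrow> real) \<Rightarrow> nat \<Rightarrow> jobconf set" where
  "Nset M S K R C l = {N. (\<forall>m s. (M \<le> m \<or> s < 1 \<or> S < s) \<longrightarrow> N m s = 0) \<and>
      (\<lambda>m. \<Sum>s\<in>{1..S}. N m s) \<in> Wset M K R C l}"

definition cost1 :: "real \<Rightarrow> (nat \<Rightarrow> real) \<Rightarrow> nat \<Rightarrow> nat \<Rightarrow> jobconf \<Rightarrow> real" where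
  "cost1 c0 c M S N = c0 * (if N \<noteq> (\<lambda>_ _. 0) then 1 else 0)
      + (\<Sum>m<M. c m * real (\<Sum>s\<in>{1..S}. N m s))"

text \<open>Job migration cost C_2(N, N') for consecutive configurations N (slot t-1), N' (slot t).\<close>
definition cost2 :: "nat \<Rightarrow> nat \<Rightarrow> jobconf \<Rightarrow> jobconf \<Rightarrow> real" where
  "cost2 M S N N' = (\<Sum>m<M. \<Sum>s\<in>{2..S}. max 0 (real (N m s) - real (N' m (s - 1))))"

definition capacity_region :: "nat \<Rightarrow> nat \<Rightarrow> nat \<Rightarrow> nat \<Rightarrow> (nat \<Rightarrow> nat \<Rightarrow> real) \<Rightarrow> (nat \<Rightarrow> nat \<Rightarrow> real) \<Rightarrow> (nat \<Rightarrow> nat \<Rightarrow> real) set" where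
  "capacity_region L M S K R C = {lam. \<exists>\<beta> :: nat \<Rightarrow> vmconf \<Rightarrow> real.
      (\<forall>l<L. (\<forall>W\<in>Wset M K R C l. 0 \<le> \<beta> l W) \<and> (\<Sum>W\<in>Wset M K R C l. \<beta> l W) = 1) \<and>
      (\<forall>m<M. (\<Sum>s\<in>{1..S}. real s * lam m s) = (\<Sum>l<L. \<Sum>W\<in>Wset M K R C l. \<beta> l W * real (W m)))}"

text \<open>A t = arrivals in slot t, Nf l t = configuration
of server l in slot t. Q(0) = A(0) (system initially empty, slot-0 arrivals present);
D = number of type-(m,s) jobs served in slot t; served type-(m,s) jobs become type-(m,s-1)
jobs at t+1 (and leave if s = 1).\<close>
fun queue :: "nat \<Rightarrow> (nat \<Rightarrow> jobconf) \<Rightarrow> (nat \<Rightarrow> nat \<Rightarrow> jobconf) \<Rightarrow> nat \<Rightarrow> jobconf" where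
  "queue L A Nf 0 = (\<lambda>m s. if s = 0 then 0 else A 0 m s)"
| "queue L A Nf (Suc t) = (\<lambda>m s. if s = 0 then 0 else
      queue L A Nf t m s - min (queue L A Nf t m s) (\<Sum>l<L. Nf l t m s)
      + min (queue L A Nf t m (Suc s)) (\<Sum>l<L. Nf l t m (Suc s))
      + A (Suc t) m s)"

definition opt_feasible :: "nat \<Rightarrow> nat \<Rightarrow> nat \<Rightarrow> nat \<Rightarrow> (nat \<Rightarrow> nat \<Rightarrow> real) \<Rightarrow> (nat \<Rightarrow> nat \<Rightarrow> real)
    \<Rightarrow> (nat \<Rightarrow> nat \<Rightarrow> real) \<Rightarrow> (nat \<Rightarrow> nat \<Rightarrow> nat \<Rightarrow> real) \<Rightarrow> (nat \<Rightarrow> jobconf \<Rightarrow> real)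
    \<Rightarrow> (nat \<Rightarrow> jobconf \<Rightarrow> jobconf \<Rightarrow> real) \<Rightarrow> bool" where
  "opt_feasible L M S K R C lam lamL \<pi> P \<longleftrightarrow>
     (\<forall>l<L. \<forall>m<M. \<forall>s\<in>{1..S}. 0 \<le> lamL l m s) \<and>
     (\<forall>m<M. \<forall>s\<in>{1..S}. (\<Sum>l<L. lamL l m s) = lam m s) \<and>
     (\<forall>l<L.
        (\<forall>N\<in>Nset M S K R C l. 0 \<le> \<pi> l N) \<and> (\<Sum>N\<in>Nset M S K R C l. \<pi> l N) = 1 \<and>
        (\<forall>N\<in>Nset M S K R C l. \<forall>N'\<in>Nset M S K R C l. 0 \<le> P l N N') \<and>
        (\<forall>N\<in>Nset M S K R C l. (\<Sum>N'\<in>Nset M S K R C l. P l N N') = 1) \<and>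
        (\<forall>N'\<in>Nset M S K R C l. (\<Sum>N\<in>Nset M S K R C l. \<pi> l N * P l N N') = \<pi> l N') \<and>
        (\<forall>m<M. (\<Sum>s\<in>{1..S}. real s * lamL l m s)
                 \<le> (\<Sum>N\<in>Nset M S K R C l. \<pi> l N * real (\<Sum>s\<in>{1..S}. N m s))))"

definition opt_objective :: "nat \<Rightarrow> nat \<Rightarrow> nat \<Rightarrow> nat \<Rightarrow> (nat \<Rightarrow> nat \<Rightarrow> real) \<Rightarrow> (nat \<Rightarrow> nat \<Rightarrow> real)
    \<Rightarrow> real \<Rightarrow> (nat \<Rightarrow> real) \<Rightarrow> real \<Rightarrow> real
    \<Rightarrow> (nat \<Rightarrow> jobconf \<Rightarrow> real) \<Rightarrow> (nat \<Rightarrow> jobconf \<Rightarrow> jobconf \<Rightarrow> real) \<Rightarrow> real" where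
  "opt_objective L M S K R C c0 c V U \<pi> P =
     (\<Sum>l<L. V * (\<Sum>N\<in>Nset M S K R C l. \<pi> l N * cost1 c0 c M S N)
           + U * (\<Sum>N\<in>Nset M S K R C l. \<pi> l N *
                    (\<Sum>N'\<in>Nset M S K R C l. P l N N' * cost2 M S N N')))"

text \<open>C_opt(lambda): the optimal value (infimum, which is attained) of the problem.\<close>
definition Copt :: "nat \<Rightarrow> nat \<Rightarrow> nat \<Rightarrow> nat \<Rightarrow> (nat \<Rightarrow> nat \<Rightarrow> real) \<Rightarrow> (nat \<Rightarrow> nat \<Rightarrow> real)
    \<Rightarrow> real \<Rightarrow> (nat \<Rightarrow> real) \<Rightarrow> real \<Rightarrow> real \<Rightarrow> (nat \<Rightarrow> nat \<Rightarrow> real) \<Rightarrow> real" where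
  "Copt L M S K R C c0 c V U lam =
     Inf {opt_objective L M S K R C c0 c V U \<pi> P | lamL \<pi> P. opt_feasible L M S K R C lam lamL \<pi> P}"

end

theory Submission
  imports Defs
begin

(*
  Average the joint laws of consecutive configurations (N(t-1), N(t)) of each server over
  t = 1..T, closing the cycle with the pair (N(T), N(0)).  Because of the closing pair both
  marginals of the average coincide, so it is a stationary Markov pair (pi, P) as in the
  optimization problem; its cost differs from the average cost up to T by O(1/T).  Summing the
  workload recursion of the queues shows that the arrived work minus the offered service capacity
  is at most the final expected workload, which stability bounds uniformly; hence the
  capacity constraint holds up to an error O(1/T).  A convergent subsequence of these pair laws
  gives a feasible point of the optimization problem whose cost is the liminf of the average
  cost.
*)

lemma finite_bounded_convergent_subseq:
  fixes f :: "nat \<Rightarrow> 'b \<Rightarrow> real"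
  assumes "finite D" and "\<And>n d. d \<in> D \<Longrightarrow> \<bar>f n d\<bar> \<le> B"
  shows "\<exists>r. strict_mono r \<and> (\<forall>d\<in>D. convergent (\<lambda>n. f (r n) d))"
  using assms
proof (induction D rule: finite_induct)
  case empty
  show ?case using strict_mono_id by blast
next
  case (insert d D)
  then obtain r where r: "strict_mono r" "\<forall>d\<in>D. convergent (\<lambda>n. f (r n) d)" by auto
  have "bounded (range (\<lambda>n. f (r n) d))"
    using insert.prems by (intro boundedI[of _ B]) auto
  then obtain x r' where r': "strict_mono r'" "((\<lambda>n. f (r n) d) \<circ> r') \<longlonglongrightarrow> x"
    using bounded_imp_convergent_subsequence by blast
  have "convergent (\<lambda>n. f (r (r' n)) d')" if "d' \<in> insert d D" for d'
  proof (cases "d' = d")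
    case True
    then show ?thesis using r'(2) by (auto simp: o_def convergent_def)
  next
    case False
    then have "convergent (\<lambda>n. f (r n) d')" using r(2) that by auto
    from convergent_subseq_convergent[OF this r'(1)] show ?thesis by (simp add: o_def)
  qed
  moreover have "strict_mono (r \<circ> r')" using r(1) r'(1) by (rule strict_mono_o)
  ultimately show ?case by (auto simp: o_def)
qed

lemma bounded_liminf_subseq:
  fixes a :: "nat \<Rightarrow> real"
  assumes "\<forall>T. \<bar>a T\<bar> \<le> B"
  obtains r \<alpha> where "strict_mono r" and "liminf (\<lambda>T. ereal (a T)) = ereal \<alpha>"
    and "(\<lambda>n. a (r n)) \<longlonglongrightarrow> \<alpha>"
proof -
  obtain r where r: "strict_mono r" "(\<lambda>n. ereal (a (r n))) \<longlonglongrightarrow> liminf (\<lambda>T. ereal (a T))"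
    using liminf_subseq_lim[of "\<lambda>T. ereal (a T)"] by (auto simp: o_def)
  have "ereal (- B) \<le> liminf (\<lambda>T. ereal (a T))"
    using assms by (intro LIMSEQ_le_const[OF r(2)]) (auto simp: abs_le_iff minus_le_iff)
  moreover have "liminf (\<lambda>T. ereal (a T)) \<le> ereal B"
    using assms by (intro LIMSEQ_le_const2[OF r(2)]) (auto simp: abs_le_iff)
  ultimately obtain \<alpha> where "liminf (\<lambda>T. ereal (a T)) = ereal \<alpha>"
    by (cases "liminf (\<lambda>T. ereal (a T))") auto
  with r that show ?thesis by auto
qed

lemma abs_average_le:
  fixes h :: "nat \<Rightarrow> real"
  assumes "\<And>t. \<bar>h t\<bar> \<le> B"
  shows "\<bar>1 / real T * (\<Sum>t\<in>{1..T}. h t)\<bar> \<le> B"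
proof -
  have "\<bar>\<Sum>t\<in>{1..T}. h t\<bar> \<le> real T * B"
    using order_trans[OF sum_abs sum_bounded_above[of "{1..T}" "\<lambda>t. \<bar>h t\<bar>" B]] assms by auto
  then show ?thesis using assms[of 0] by (cases "T = 0") (auto simp: abs_mult field_simps)
qed

lemma average_with_extra_term_tendsto_0:
  fixes h z :: "nat \<Rightarrow> real"
  assumes h: "\<And>t. \<bar>h t\<bar> \<le> B" and z: "\<And>T. \<bar>z T\<bar> \<le> B"
  shows "(\<lambda>T. ((\<Sum>t\<in>{1..T}. h t) + z T) / (real T + 1) - 1 / real T * (\<Sum>t\<in>{1..T}. h t))
           \<longlonglongrightarrow> 0"
proof (rule Lim_null_comparison)
  show "(\<lambda>T. 2 * B / (real T + 1)) \<longlonglongrightarrow> 0"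
    by (rule tendsto_divide_0[OF tendsto_const]) real_asymp
  show "\<forall>\<^sub>F T in sequentially. norm (((\<Sum>t\<in>{1..T}. h t) + z T) / (real T + 1)
          - 1 / real T * (\<Sum>t\<in>{1..T}. h t)) \<le> 2 * B / (real T + 1)"
  proof (intro always_eventually allI)
    fix T
    define a where "a = 1 / real T * (\<Sum>t\<in>{1..T}. h t)"
    have "((\<Sum>t\<in>{1..T}. h t) + z T) / (real T + 1) - a = (z T - a) / (real T + 1)"
      by (cases "T = 0") (auto simp: a_def field_simps)
    moreover have "\<bar>a\<bar> \<le> B" unfolding a_def using h by (rule abs_average_le)
    ultimately show "norm (((\<Sum>t\<in>{1..T}. h t) + z T) / (real T + 1) - a) \<le> 2 * B / (real T + 1)"
      using z[of T] by (simp add: divide_right_mono)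
  qed
qed

lemma sum_cyclic_pred:
  fixes f :: "nat \<Rightarrow> 'a :: comm_monoid_add"
  shows "(\<Sum>t\<le>T. f (if t = 0 then T else t - 1)) = (\<Sum>t\<le>T. f t)"
  by (subst sum.atMost_shift) (simp add: lessThan_Suc_atMost[symmetric] add.commute)

lemma (in finite_measure) integral_finite_range:
  fixes Y :: "'a \<Rightarrow> 'c" and f :: "'c \<Rightarrow> real"
  assumes "finite D" and range: "\<forall>\<omega>\<in>space M. Y \<omega> \<in> D"
    and events: "\<forall>y\<in>D. {\<omega>\<in>space M. Y \<omega> = y} \<in> sets M"
  shows "integrable M (\<lambda>\<omega>. f (Y \<omega>))"
    and "(\<integral>\<omega>. f (Y \<omega>) \<partial>M) = (\<Sum>y\<in>D. measure M {\<omega>\<in>space M. Y \<omega> = y} * f y)"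
proof -
  have expand: "f (Y \<omega>) = (\<Sum>y\<in>D. f y * indicator {\<omega>\<in>space M. Y \<omega> = y} \<omega>)"
    if "\<omega> \<in> space M" for \<omega>
    using that range \<open>finite D\<close>
    by (simp add: indicator_def if_distrib sum.If_cases Int_absorb1 cong: if_cong)
  have integrable: "integrable M (\<lambda>\<omega>. f y * indicator {\<omega>\<in>space M. Y \<omega> = y} \<omega> :: real)"
    if "y \<in> D" for y
    using events that
    by (intro integrable_mult_right integrable_real_indicator) (auto simp: emeasure_eq_measure)
  show "integrable M (\<lambda>\<omega>. f (Y \<omega>))"
    using integrable by (subst Bochner_Integration.integrable_cong[OF refl expand]) auto
  have "(\<integral>\<omega>. f (Y \<omega>) \<partial>M) = (\<integral>\<omega>. (\<Sum>y\<in>D. f y * indicator {\<omega>\<in>space M. Y \<omega> = y} \<omega>) \<partial>M)"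
    by (rule Bochner_Integration.integral_cong[OF refl expand])
  also have "\<dots> = (\<Sum>y\<in>D. measure M {\<omega>\<in>space M. Y \<omega> = y} * f y)"
    using integrable events by (simp add: Bochner_Integration.integral_sum mult.commute)
  finally show "(\<integral>\<omega>. f (Y \<omega>) \<partial>M) = (\<Sum>y\<in>D. measure M {\<omega>\<in>space M. Y \<omega> = y} * f y)" .
qed

section \<open>The optimization problem\<close>

lemma finite_Nset:
  assumes R_nonneg: "\<forall>m<M. \<forall>k<K. 0 \<le> R m k" and R_pos: "\<forall>m<M. \<exists>k<K. 0 < R m k"
  shows "finite (Nset M S K R C l)"
proof -
  have "\<exists>b. \<forall>N\<in>Nset M S K R C l. (\<Sum>s\<in>{1..S}. N m s) \<le> b" if m: "m < M" for m
  proof -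
    obtain k where k: "k < K" "0 < R m k" using R_pos m by blast
    have "(\<Sum>s\<in>{1..S}. N m s) \<le> nat \<lceil>C l k / R m k\<rceil>" if N: "N \<in> Nset M S K R C l" for N
    proof -
      have "real (\<Sum>s\<in>{1..S}. N m s) * R m k \<le> (\<Sum>m'<M. real (\<Sum>s\<in>{1..S}. N m' s) * R m' k)"
        by (rule member_le_sum[where f = "\<lambda>m'. real (\<Sum>s\<in>{1..S}. N m' s) * R m' k"])
          (use m R_nonneg k in \<open>auto intro!: mult_nonneg_nonneg sum_nonneg\<close>)
      also have "\<dots> \<le> C l k" using N k unfolding Nset_def Wset_def by auto
      finally have "real (\<Sum>s\<in>{1..S}. N m s) \<le> C l k / R m k" using k by (simp add: field_simps)
      then have "real (\<Sum>s\<in>{1..S}. N m s) \<le> real (nat \<lceil>C l k / R m k\<rceil>)" by linarith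
      then show ?thesis by (simp only: of_nat_le_iff)
    qed
    then show ?thesis by blast
  qed
  then obtain b where b: "\<And>m N. m < M \<Longrightarrow> N \<in> Nset M S K R C l \<Longrightarrow> (\<Sum>s\<in>{1..S}. N m s) \<le> b m"
    by metis
  define I where "I = {..<M} \<times> {1..S}"
  define B where "B = (\<Sum>m<M. b m)"
  have bound: "N m s \<le> B" if "N \<in> Nset M S K R C l" "(m, s) \<in> I" for N m s
  proof -
    have "N m s \<le> (\<Sum>s\<in>{1..S}. N m s)" by (rule member_le_sum) (use that I_def in auto)
    also have "\<dots> \<le> b m" using b that I_def by auto
    also have "\<dots> \<le> B" unfolding B_def by (rule member_le_sum) (use that I_def in auto)
    finally show ?thesis .
  qed
  then have "Nset M S K R C l \<subseteq> (\<lambda>f m s. if (m, s) \<in> I then f (m, s) else 0) ` (\<Pi>\<^sub>E p\<in>I. {..B})"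
  proof (intro subsetI image_eqI)
    fix N assume N: "N \<in> Nset M S K R C l"
    show "N = (\<lambda>m s. if (m, s) \<in> I then restrict (\<lambda>(m, s). N m s) I (m, s) else 0)"
      using N unfolding Nset_def I_def by (intro ext) (auto simp: Suc_le_eq)
    show "restrict (\<lambda>(m, s). N m s) I \<in> (\<Pi>\<^sub>E p\<in>I. {..B})"
      using N bound by auto
  qed
  moreover have "finite (\<Pi>\<^sub>E p\<in>I. {..B})" unfolding I_def by (intro finite_PiE) auto
  ultimately show ?thesis using finite_subset by blast
qed

lemma cost1_nonneg: "0 \<le> c0 \<Longrightarrow> \<forall>m<M. 0 \<le> c m \<Longrightarrow> 0 \<le> cost1 c0 c M S N"
  unfolding cost1_def by (auto intro!: add_nonneg_nonneg sum_nonneg mult_nonneg_nonneg)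

lemma cost2_nonneg: "0 \<le> cost2 M S N N'"
  unfolding cost2_def by (auto intro!: sum_nonneg)

text \<open>A joint law w of consecutive configurations with equal marginals is the same as a distribution
  \<pi> with a stochastic matrix P satisfying \<pi> P = \<pi>, via w x y = \<pi> x * P x y.\<close>

definition stationary_pairs :: "nat \<Rightarrow> (nat \<Rightarrow> 'b set) \<Rightarrow> (nat \<Rightarrow> 'b \<Rightarrow> 'b \<Rightarrow> real) \<Rightarrow> bool" where
  "stationary_pairs L Ns w \<longleftrightarrow> (\<forall>l<L.
     (\<forall>x\<in>Ns l. \<forall>y\<in>Ns l. 0 \<le> w l x y) \<and> (\<Sum>x\<in>Ns l. \<Sum>y\<in>Ns l. w l x y) = 1 \<and>
     (\<forall>x\<in>Ns l. (\<Sum>y\<in>Ns l. w l y x) = (\<Sum>y\<in>Ns l. w l x y)))"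

lemma stationary_pairs_kernel:
  fixes w :: "nat \<Rightarrow> 'b \<Rightarrow> 'b \<Rightarrow> real"
  assumes fin: "\<forall>l<L. finite (Ns l)" and w: "stationary_pairs L Ns w"
  obtains \<pi> P where "\<forall>l<L. \<forall>x\<in>Ns l. \<pi> l x = (\<Sum>y\<in>Ns l. w l x y)"
    and "\<forall>l<L. \<forall>x\<in>Ns l. \<forall>y\<in>Ns l. \<pi> l x * P l x y = w l x y"
    and "\<forall>l<L. \<forall>x\<in>Ns l. \<forall>y\<in>Ns l. 0 \<le> P l x y"
    and "\<forall>l<L. \<forall>x\<in>Ns l. (\<Sum>y\<in>Ns l. P l x y) = 1"
    and "\<forall>l<L. \<forall>y\<in>Ns l. (\<Sum>x\<in>Ns l. \<pi> l x * P l x y) = \<pi> l y"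
proof
  define \<pi> where "\<pi> l x = (\<Sum>y\<in>Ns l. w l x y)" for l x
  define P where "P l x y = (if \<pi> l x = 0 then (if x = y then 1 else 0) else w l x y / \<pi> l x)"
    for l x y
  have w_nonneg: "\<forall>x\<in>Ns l. \<forall>y\<in>Ns l. 0 \<le> w l x y" if "l < L" for l
    using w that unfolding stationary_pairs_def by blast
  show "\<forall>l<L. \<forall>x\<in>Ns l. \<pi> l x = (\<Sum>y\<in>Ns l. w l x y)" by (simp add: \<pi>_def)
  show joint: "\<forall>l<L. \<forall>x\<in>Ns l. \<forall>y\<in>Ns l. \<pi> l x * P l x y = w l x y"
  proof (intro allI impI ballI)
    fix l x y assume "l < L" "x \<in> Ns l" "y \<in> Ns l"
    moreover from this have "w l x y \<le> \<pi> l x"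
      unfolding \<pi>_def using fin w_nonneg by (intro member_le_sum) auto
    ultimately show "\<pi> l x * P l x y = w l x y" using w_nonneg by (force simp: P_def)
  qed
  have "0 \<le> \<pi> l x" if "l < L" "x \<in> Ns l" for l x
    unfolding \<pi>_def using w_nonneg that by (auto intro: sum_nonneg)
  then show "\<forall>l<L. \<forall>x\<in>Ns l. \<forall>y\<in>Ns l. 0 \<le> P l x y" using w_nonneg by (auto simp: P_def)
  show "\<forall>l<L. \<forall>x\<in>Ns l. (\<Sum>y\<in>Ns l. P l x y) = 1"
  proof (intro allI impI ballI)
    fix l x assume "l < L" "x \<in> Ns l"
    then show "(\<Sum>y\<in>Ns l. P l x y) = 1"
      using fin by (cases "\<pi> l x = 0") (simp_all add: P_def sum_divide_distrib[symmetric] \<pi>_def)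
  qed
  show "\<forall>l<L. \<forall>y\<in>Ns l. (\<Sum>x\<in>Ns l. \<pi> l x * P l x y) = \<pi> l y"
    using joint w unfolding stationary_pairs_def by (simp add: \<pi>_def)
qed

lemma proportional_split:
  fixes lam :: "nat \<Rightarrow> nat \<Rightarrow> real" and cap :: "nat \<Rightarrow> nat \<Rightarrow> real"
  assumes lam_nonneg: "\<forall>m<M. \<forall>s\<in>{1..S}. 0 \<le> lam m s"
    and cap_nonneg: "\<forall>l<L. \<forall>m. 0 \<le> cap l m"
    and load: "\<forall>m<M. (\<Sum>s\<in>{1..S}. real s * lam m s) \<le> (\<Sum>l<L. cap l m)"
  obtains lamL where "\<forall>l<L. \<forall>m<M. \<forall>s\<in>{1..S}. 0 \<le> lamL l m s"
    and "\<forall>m<M. \<forall>s\<in>{1..S}. (\<Sum>l<L. lamL l m s) = lam m s"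
    and "\<forall>l<L. \<forall>m<M. (\<Sum>s\<in>{1..S}. real s * lamL l m s) \<le> cap l m"
proof
  define tot where "tot m = (\<Sum>l<L. cap l m)" for m
  define lamL where "lamL l m s = lam m s * cap l m / tot m" for l m s
  have tot_nonneg: "0 \<le> tot m" for m unfolding tot_def using cap_nonneg by (auto intro: sum_nonneg)
  have load_zero: "lam m s = 0" if "m < M" "s \<in> {1..S}" "tot m = 0" for m s
  proof -
    have "\<forall>s\<in>{1..S}. 0 \<le> real s * lam m s" using lam_nonneg that by simp
    moreover have "(\<Sum>s\<in>{1..S}. real s * lam m s) \<le> 0"
      using load[rule_format, OF that(1)] that(3) unfolding tot_def by simp
    ultimately have "real s * lam m s = 0"
      using that(2) sum_nonneg_eq_0_iff[of "{1..S}" "\<lambda>s. real s * lam m s"]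
      by (metis (no_types, lifting) finite_atLeastAtMost order_antisym sum_nonneg)
    then show ?thesis using that(2) by simp
  qed
  show "\<forall>l<L. \<forall>m<M. \<forall>s\<in>{1..S}. 0 \<le> lamL l m s"
    unfolding lamL_def using lam_nonneg cap_nonneg tot_nonneg by (auto intro!: divide_nonneg_nonneg)
  show "\<forall>m<M. \<forall>s\<in>{1..S}. (\<Sum>l<L. lamL l m s) = lam m s"
  proof (intro allI impI ballI)
    fix m s assume "m < M" "s \<in> {1..S}"
    then show "(\<Sum>l<L. lamL l m s) = lam m s"
      using load_zero[of m s] unfolding lamL_def
      by (cases "tot m = 0") (simp_all add: sum_divide_distrib[symmetric] sum_distrib_left[symmetric] tot_def)
  qed
  show "\<forall>l<L. \<forall>m<M. (\<Sum>s\<in>{1..S}. real s * lamL l m s) \<le> cap l m"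
  proof (intro allI impI)
    fix l m assume "l < L" "m < M"
    have "(\<Sum>s\<in>{1..S}. real s * lamL l m s) = (\<Sum>s\<in>{1..S}. real s * lam m s) * (cap l m / tot m)"
      unfolding lamL_def sum_distrib_right by (simp add: mult.assoc)
    also have "\<dots> \<le> tot m * (cap l m / tot m)"
      using load \<open>m < M\<close> \<open>l < L\<close> cap_nonneg tot_nonneg
      by (intro mult_right_mono divide_nonneg_nonneg) (simp_all add: tot_def)
    also have "\<dots> \<le> cap l m"
      using \<open>l < L\<close> cap_nonneg by (cases "tot m = 0") simp_all
    finally show "(\<Sum>s\<in>{1..S}. real s * lamL l m s) \<le> cap l m" .
  qed
qed

lemma opt_objective_eq_pair_cost:
  fixes M S K :: nat and R C :: "nat \<Rightarrow> nat \<Rightarrow> real" and w :: "nat \<Rightarrow> jobconf \<Rightarrow> jobconf \<Rightarrow> real"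
  defines "Ns \<equiv> Nset M S K R C"
  assumes marginals: "\<forall>l<L. \<forall>x\<in>Ns l. (\<Sum>y\<in>Ns l. w l y x) = (\<Sum>y\<in>Ns l. w l x y)"
    and \<pi>: "\<forall>l<L. \<forall>x\<in>Ns l. \<pi> l x = (\<Sum>y\<in>Ns l. w l x y)"
    and P: "\<forall>l<L. \<forall>x\<in>Ns l. \<forall>y\<in>Ns l. \<pi> l x * P l x y = w l x y"
  shows "opt_objective L M S K R C c0 c V U \<pi> P =
    (\<Sum>l<L. \<Sum>x\<in>Ns l. \<Sum>y\<in>Ns l. w l x y * (V * cost1 c0 c M S y + U * cost2 M S x y))"
  unfolding opt_objective_def Ns_def[symmetric]
proof (intro sum.cong refl)
  fix l assume "l \<in> {..<L}"
  then have "(\<Sum>x\<in>Ns l. \<pi> l x * cost1 c0 c M S x)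
      = (\<Sum>x\<in>Ns l. (\<Sum>y\<in>Ns l. w l y x) * cost1 c0 c M S x)"
    using marginals \<pi> by (intro sum.cong) auto
  also have "\<dots> = (\<Sum>x\<in>Ns l. \<Sum>y\<in>Ns l. w l y x * cost1 c0 c M S x)"
    by (simp add: sum_distrib_right)
  also have "\<dots> = (\<Sum>x\<in>Ns l. \<Sum>y\<in>Ns l. w l x y * cost1 c0 c M S y)"
    by (rule sum.swap)
  finally have running: "(\<Sum>x\<in>Ns l. \<pi> l x * cost1 c0 c M S x) = \<dots>" .
  have migration: "(\<Sum>x\<in>Ns l. \<pi> l x * (\<Sum>y\<in>Ns l. P l x y * cost2 M S x y))
      = (\<Sum>x\<in>Ns l. \<Sum>y\<in>Ns l. w l x y * cost2 M S x y)"
    using P \<open>l \<in> {..<L}\<close> by (auto simp: sum_distrib_left mult.assoc[symmetric] intro!: sum.cong)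
  show "V * (\<Sum>x\<in>Ns l. \<pi> l x * cost1 c0 c M S x)
      + U * (\<Sum>x\<in>Ns l. \<pi> l x * (\<Sum>y\<in>Ns l. P l x y * cost2 M S x y))
      = (\<Sum>x\<in>Ns l. \<Sum>y\<in>Ns l. w l x y * (V * cost1 c0 c M S y + U * cost2 M S x y))"
    unfolding running migration by (simp add: algebra_simps sum.distrib sum_distrib_left)
qed

lemma opt_feasible_of_stationary_pairs:
  fixes M S K :: nat and R C :: "nat \<Rightarrow> nat \<Rightarrow> real" and w :: "nat \<Rightarrow> jobconf \<Rightarrow> jobconf \<Rightarrow> real"
  defines "Ns \<equiv> Nset M S K R C"
  assumes fin: "\<forall>l<L. finite (Ns l)" and w: "stationary_pairs L Ns w"
    and lam_nonneg: "\<forall>m<M. \<forall>s\<in>{1..S}. 0 \<le> lam m s"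
    and load: "\<forall>m<M. (\<Sum>s\<in>{1..S}. real s * lam m s)
                 \<le> (\<Sum>l<L. \<Sum>x\<in>Ns l. \<Sum>y\<in>Ns l. w l x y * real (\<Sum>s\<in>{1..S}. x m s))"
  obtains lamL \<pi> P where "opt_feasible L M S K R C lam lamL \<pi> P"
    and "opt_objective L M S K R C c0 c V U \<pi> P =
      (\<Sum>l<L. \<Sum>x\<in>Ns l. \<Sum>y\<in>Ns l. w l x y * (V * cost1 c0 c M S y + U * cost2 M S x y))"
proof -
  obtain \<pi> P where \<pi>: "\<forall>l<L. \<forall>x\<in>Ns l. \<pi> l x = (\<Sum>y\<in>Ns l. w l x y)"
    and joint: "\<forall>l<L. \<forall>x\<in>Ns l. \<forall>y\<in>Ns l. \<pi> l x * P l x y = w l x y"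
    and kernel: "\<forall>l<L. \<forall>x\<in>Ns l. \<forall>y\<in>Ns l. 0 \<le> P l x y" "\<forall>l<L. \<forall>x\<in>Ns l. (\<Sum>y\<in>Ns l. P l x y) = 1"
      "\<forall>l<L. \<forall>y\<in>Ns l. (\<Sum>x\<in>Ns l. \<pi> l x * P l x y) = \<pi> l y"
    using stationary_pairs_kernel[OF fin w] by blast
  have \<pi>_nonneg: "\<forall>l<L. \<forall>x\<in>Ns l. 0 \<le> \<pi> l x" and \<pi>_sum: "\<forall>l<L. (\<Sum>x\<in>Ns l. \<pi> l x) = 1"
    using w \<pi> unfolding stationary_pairs_def by (auto intro: sum_nonneg)
  define cap where "cap l m = (\<Sum>x\<in>Ns l. \<pi> l x * real (\<Sum>s\<in>{1..S}. x m s))" for l m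
  have cap_nonneg: "\<forall>l<L. \<forall>m. 0 \<le> cap l m"
    unfolding cap_def using \<pi>_nonneg by (auto intro!: sum_nonneg mult_nonneg_nonneg)
  have "(\<Sum>l<L. cap l m) = (\<Sum>l<L. \<Sum>x\<in>Ns l. \<Sum>y\<in>Ns l. w l x y * real (\<Sum>s\<in>{1..S}. x m s))" for m
    unfolding cap_def using \<pi> by (auto simp: sum_distrib_right intro!: sum.cong)
  then obtain lamL where lamL: "\<forall>l<L. \<forall>m<M. \<forall>s\<in>{1..S}. 0 \<le> lamL l m s"
    "\<forall>m<M. \<forall>s\<in>{1..S}. (\<Sum>l<L. lamL l m s) = lam m s"
    "\<forall>l<L. \<forall>m<M. (\<Sum>s\<in>{1..S}. real s * lamL l m s) \<le> cap l m"
    using proportional_split[OF lam_nonneg cap_nonneg] load by auto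
  have "opt_feasible L M S K R C lam lamL \<pi> P"
    using lamL(1,2) lamL(3)[unfolded cap_def] \<pi>_nonneg \<pi>_sum kernel
    unfolding opt_feasible_def Ns_def[symmetric] by (intro conjI allI impI) simp_all
  moreover have "opt_objective L M S K R C c0 c V U \<pi> P =
      (\<Sum>l<L. \<Sum>x\<in>Ns l. \<Sum>y\<in>Ns l. w l x y * (V * cost1 c0 c M S y + U * cost2 M S x y))"
    using w \<pi> joint unfolding stationary_pairs_def Ns_def by (intro opt_objective_eq_pair_cost) auto
  ultimately show ?thesis using that by blast
qed

lemma Copt_le_opt_objective:
  assumes "opt_feasible L M S K R C lam lamL \<pi> P"
    and "0 \<le> c0" "\<forall>m<M. 0 \<le> c m" "0 \<le> U" "0 \<le> V"
  shows "Copt L M S K R C c0 c V U lam \<le> opt_objective L M S K R C c0 c V U \<pi> P"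
proof -
  have "0 \<le> opt_objective L M S K R C c0 c V U \<pi>' P'"
    if "opt_feasible L M S K R C lam lamL' \<pi>' P'" for lamL' \<pi>' P'
  proof -
    from that have "\<forall>l<L. \<forall>N\<in>Nset M S K R C l. 0 \<le> \<pi>' l N"
      "\<forall>l<L. \<forall>N\<in>Nset M S K R C l. \<forall>N'\<in>Nset M S K R C l. 0 \<le> P' l N N'"
      unfolding opt_feasible_def by auto
    with cost1_nonneg[OF assms(2,3)] cost2_nonneg assms(4,5) show ?thesis
      unfolding opt_objective_def by (intro sum_nonneg add_nonneg_nonneg mult_nonneg_nonneg) auto
  qed
  then show ?thesis
    unfolding Copt_def using assms(1) by (intro cInf_lower bdd_belowI[of _ 0]) auto
qed

lemma stationary_pairs_convergent_subseq:
  fixes w :: "nat \<Rightarrow> nat \<Rightarrow> 'b \<Rightarrow> 'b \<Rightarrow> real"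
  assumes fin: "\<forall>l<L. finite (Ns l)" and w: "\<forall>n. stationary_pairs L Ns (w n)"
  obtains r w' where "strict_mono r" and "stationary_pairs L Ns w'"
    and "\<forall>l<L. \<forall>x\<in>Ns l. \<forall>y\<in>Ns l. (\<lambda>n. w (r n) l x y) \<longlonglongrightarrow> w' l x y"
proof -
  define D where "D = Sigma {..<L} (\<lambda>l. Ns l \<times> Ns l)"
  have "\<bar>w n l x y\<bar> \<le> 1" if "(l, x, y) \<in> D" for n l x y
  proof -
    have l: "l < L" "x \<in> Ns l" "y \<in> Ns l" using that by (auto simp: D_def)
    then have nonneg: "\<forall>x\<in>Ns l. \<forall>y\<in>Ns l. 0 \<le> w n l x y"
      using w unfolding stationary_pairs_def by blast
    have "w n l x y \<le> (\<Sum>y\<in>Ns l. w n l x y)"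
      using l fin nonneg by (intro member_le_sum) auto
    also have "\<dots> \<le> (\<Sum>x\<in>Ns l. \<Sum>y\<in>Ns l. w n l x y)"
      using l fin nonneg by (intro member_le_sum[where f = "\<lambda>x. \<Sum>y\<in>Ns l. w n l x y"] sum_nonneg) auto
    also have "\<dots> = 1" using w l unfolding stationary_pairs_def by blast
    finally show ?thesis using nonneg l by auto
  qed
  moreover have "finite D" unfolding D_def using fin by auto
  ultimately obtain r where r: "strict_mono r"
    "\<forall>d\<in>D. convergent (\<lambda>n. case d of (l, x, y) \<Rightarrow> w (r n) l x y)"
    using finite_bounded_convergent_subseq[of D "\<lambda>n (l, x, y). w n l x y" 1] by force
  define w' where "w' l x y = lim (\<lambda>n. w (r n) l x y)" for l x y
  have lim: "\<forall>l<L. \<forall>x\<in>Ns l. \<forall>y\<in>Ns l. (\<lambda>n. w (r n) l x y) \<longlonglongrightarrow> w' l x y"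
    using r(2) unfolding D_def w'_def by (auto simp: convergent_LIMSEQ_iff)
  have "stationary_pairs L Ns w'"
    unfolding stationary_pairs_def
  proof (intro allI impI conjI ballI)
    fix l assume l: "l < L"
    then have w_l: "\<forall>n. (\<forall>x\<in>Ns l. \<forall>y\<in>Ns l. 0 \<le> w (r n) l x y) \<and> (\<Sum>x\<in>Ns l. \<Sum>y\<in>Ns l. w (r n) l x y) = 1
        \<and> (\<forall>x\<in>Ns l. (\<Sum>y\<in>Ns l. w (r n) l y x) = (\<Sum>y\<in>Ns l. w (r n) l x y))"
      using w unfolding stationary_pairs_def by blast
    show "0 \<le> w' l x y" if "x \<in> Ns l" "y \<in> Ns l" for x y
      using lim l that w_l by (intro LIMSEQ_le_const[of "\<lambda>n. w (r n) l x y"]) auto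
    have "(\<lambda>n. \<Sum>x\<in>Ns l. \<Sum>y\<in>Ns l. w (r n) l x y) \<longlonglongrightarrow> (\<Sum>x\<in>Ns l. \<Sum>y\<in>Ns l. w' l x y)"
      using lim l by (intro tendsto_sum) auto
    then show "(\<Sum>x\<in>Ns l. \<Sum>y\<in>Ns l. w' l x y) = 1"
      using w_l by (simp add: LIMSEQ_const_iff)
    show "(\<Sum>y\<in>Ns l. w' l y x) = (\<Sum>y\<in>Ns l. w' l x y)" if "x \<in> Ns l" for x
    proof (rule LIMSEQ_unique)
      show "(\<lambda>n. \<Sum>y\<in>Ns l. w (r n) l y x) \<longlonglongrightarrow> (\<Sum>y\<in>Ns l. w' l y x)"
        using lim l that by (intro tendsto_sum) auto
      show "(\<lambda>n. \<Sum>y\<in>Ns l. w (r n) l y x) \<longlonglongrightarrow> (\<Sum>y\<in>Ns l. w' l x y)"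
        using lim l that w_l by (simp, intro tendsto_sum) auto
    qed
  qed
  with r(1) lim that show ?thesis by blast
qed

lemma Copt_le_liminf:
  fixes M S K :: nat and R C :: "nat \<Rightarrow> nat \<Rightarrow> real"
    and w :: "nat \<Rightarrow> nat \<Rightarrow> jobconf \<Rightarrow> jobconf \<Rightarrow> real" and a e :: "nat \<Rightarrow> real"
  defines "Ns \<equiv> Nset M S K R C"
  assumes fin: "\<forall>l<L. finite (Ns l)" and w: "\<forall>T. stationary_pairs L Ns (w T)"
    and load: "\<forall>T. \<forall>m<M. (\<Sum>s\<in>{1..S}. real s * lam m s) - e T
                 \<le> (\<Sum>l<L. \<Sum>x\<in>Ns l. \<Sum>y\<in>Ns l. w T l x y * real (\<Sum>s\<in>{1..S}. x m s))"
    and e: "e \<longlonglongrightarrow> 0"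
    and cost: "(\<lambda>T. (\<Sum>l<L. \<Sum>x\<in>Ns l. \<Sum>y\<in>Ns l.
                 w T l x y * (V * cost1 c0 c M S y + U * cost2 M S x y)) - a T) \<longlonglongrightarrow> 0"
    and a_bounded: "\<forall>T. \<bar>a T\<bar> \<le> B"
    and lam_nonneg: "\<forall>m<M. \<forall>s\<in>{1..S}. 0 \<le> lam m s"
    and "0 \<le> c0" "\<forall>m<M. 0 \<le> c m" "0 \<le> U" "0 \<le> V"
  shows "ereal (Copt L M S K R C c0 c V U lam) \<le> liminf (\<lambda>T. ereal (a T))"
proof -
  define pair_cost where "pair_cost x y = V * cost1 c0 c M S y + U * cost2 M S x y" for x y
  obtain r0 ell where r0: "strict_mono r0" and ell: "liminf (\<lambda>T. ereal (a T)) = ereal ell"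
    and a_lim: "(\<lambda>n. a (r0 n)) \<longlonglongrightarrow> ell"
    using bounded_liminf_subseq[OF a_bounded] by blast
  obtain r w' where r: "strict_mono r" and w': "stationary_pairs L Ns w'"
    and lim: "\<forall>l<L. \<forall>x\<in>Ns l. \<forall>y\<in>Ns l. (\<lambda>n. w (r0 (r n)) l x y) \<longlonglongrightarrow> w' l x y"
    using stationary_pairs_convergent_subseq[OF fin, of "\<lambda>n. w (r0 n)"] w by blast
  have "(\<Sum>s\<in>{1..S}. real s * lam m s)
      \<le> (\<Sum>l<L. \<Sum>x\<in>Ns l. \<Sum>y\<in>Ns l. w' l x y * real (\<Sum>s\<in>{1..S}. x m s))" if "m < M" for m
  proof (rule LIMSEQ_le)
    show "(\<lambda>n. (\<Sum>s\<in>{1..S}. real s * lam m s) - e (r0 (r n))) \<longlonglongrightarrow> (\<Sum>s\<in>{1..S}. real s * lam m s)"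
      using tendsto_diff[OF tendsto_const LIMSEQ_subseq_LIMSEQ[OF e strict_mono_o[OF r0 r]]]
      by (simp add: o_def)
    show "(\<lambda>n. \<Sum>l<L. \<Sum>x\<in>Ns l. \<Sum>y\<in>Ns l. w (r0 (r n)) l x y * real (\<Sum>s\<in>{1..S}. x m s))
        \<longlonglongrightarrow> (\<Sum>l<L. \<Sum>x\<in>Ns l. \<Sum>y\<in>Ns l. w' l x y * real (\<Sum>s\<in>{1..S}. x m s))"
      using lim by (intro tendsto_sum tendsto_mult_right) auto
  qed (use load that in auto)
  then have load': "\<forall>m<M. (\<Sum>s\<in>{1..S}. real s * lam m s)
      \<le> (\<Sum>l<L. \<Sum>x\<in>Ns l. \<Sum>y\<in>Ns l. w' l x y * real (\<Sum>s\<in>{1..S}. x m s))" by blast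
  obtain lamL \<pi> P where feasible: "opt_feasible L M S K R C lam lamL \<pi> P"
    and objective: "opt_objective L M S K R C c0 c V U \<pi> P
      = (\<Sum>l<L. \<Sum>x\<in>Ns l. \<Sum>y\<in>Ns l. w' l x y * pair_cost x y)"
    unfolding Ns_def pair_cost_def
    by (rule opt_feasible_of_stationary_pairs[OF fin[unfolded Ns_def] w'[unfolded Ns_def] lam_nonneg
          load'[unfolded Ns_def]])
  have "(\<lambda>n. \<Sum>l<L. \<Sum>x\<in>Ns l. \<Sum>y\<in>Ns l. w (r0 (r n)) l x y * pair_cost x y)
      \<longlonglongrightarrow> (\<Sum>l<L. \<Sum>x\<in>Ns l. \<Sum>y\<in>Ns l. w' l x y * pair_cost x y)"
    using lim by (intro tendsto_sum tendsto_mult_right) auto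
  moreover have "(\<lambda>n. \<Sum>l<L. \<Sum>x\<in>Ns l. \<Sum>y\<in>Ns l. w (r0 (r n)) l x y * pair_cost x y) \<longlonglongrightarrow> ell"
    using tendsto_add[OF LIMSEQ_subseq_LIMSEQ[OF cost strict_mono_o[OF r0 r]] LIMSEQ_subseq_LIMSEQ[OF a_lim r]]
    by (simp add: o_def pair_cost_def)
  ultimately have "opt_objective L M S K R C c0 c V U \<pi> P = ell"
    unfolding objective by (rule LIMSEQ_unique)
  then show ?thesis
    using Copt_le_opt_objective[OF feasible assms(9-12)] ell by simp
qed

section \<open>Queue dynamics\<close>

definition workload :: "nat \<Rightarrow> jobconf \<Rightarrow> nat \<Rightarrow> real" where
  "workload S q m = (\<Sum>s\<in>{1..S}. real s * real (q m s))"

lemma queue_le_pow: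
  assumes "\<forall>t m s. A t m s \<le> Amax"
  shows "queue L A Nf t m s \<le> 3 ^ t * Amax"
proof (induction t arbitrary: s)
  case 0
  then show ?case using assms by simp
next
  case (Suc t)
  have "queue L A Nf (Suc t) m s \<le> queue L A Nf t m s + queue L A Nf t m (Suc s) + A (Suc t) m s"
    by (auto simp: min_def)
  also have "\<dots> \<le> 3 ^ t * Amax + 3 ^ t * Amax + 3 ^ t * Amax"
    using Suc assms order_trans[of "A (Suc t) m s" Amax "3 ^ t * Amax"] by (intro add_mono) auto
  finally show ?case by simp
qed

lemma sum_mult_Suc_shift:
  fixes f :: "nat \<Rightarrow> real"
  shows "(\<Sum>s\<in>{1..n}. real s * f (Suc s)) + (\<Sum>s\<in>{1..n}. f s)
    = (\<Sum>s\<in>{1..n}. real s * f s) + real n * f (Suc n)"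
  by (induction n) (auto simp: algebra_simps)

text \<open>Serving a type-(m, s) job turns it into a type-(m, s - 1) job, so each unit of service
  lowers the workload by exactly one.\<close>

lemma workload_queue_Suc_ge:
  "workload S (queue L A Nf t) m - (\<Sum>l<L. real (\<Sum>s\<in>{1..S}. Nf l t m s)) + workload S (A (Suc t)) m
     \<le> workload S (queue L A Nf (Suc t)) m"
proof -
  define q where "q s = real (queue L A Nf t m s)" for s
  define f where "f s = min (q s) (real (\<Sum>l<L. Nf l t m s))" for s
  have step: "real (queue L A Nf (Suc t) m s) = q s - f s + f (Suc s) + real (A (Suc t) m s)"
    if "s \<in> {1..S}" for s
    using that by (simp add: q_def f_def of_nat_min)
  have f_nonneg: "0 \<le> f s" for s by (simp add: f_def q_def sum_nonneg)
  have "workload S (queue L A Nf (Suc t)) m = (\<Sum>s\<in>{1..S}.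
      real s * q s - real s * f s + real s * f (Suc s) + real s * real (A (Suc t) m s))"
    unfolding workload_def by (intro sum.cong refl) (simp only: step, simp add: algebra_simps)
  also have "\<dots> = workload S (queue L A Nf t) m - (\<Sum>s\<in>{1..S}. real s * f s)
      + (\<Sum>s\<in>{1..S}. real s * f (Suc s)) + workload S (A (Suc t)) m"
    by (simp add: workload_def q_def sum.distrib sum_subtractf)
  finally have "workload S (queue L A Nf t) m - (\<Sum>s\<in>{1..S}. f s) + workload S (A (Suc t)) m
      \<le> workload S (queue L A Nf (Suc t)) m"
    using sum_mult_Suc_shift[of f S] mult_nonneg_nonneg[OF of_nat_0_le_iff[of S] f_nonneg[of "Suc S"]]
    by linarith
  moreover have "(\<Sum>s\<in>{1..S}. f s) \<le> (\<Sum>l<L. real (\<Sum>s\<in>{1..S}. Nf l t m s))"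
    using sum_mono[of "{1..S}" f "\<lambda>s. real (\<Sum>l<L. Nf l t m s)"]
    by (simp add: f_def sum.swap[of _ "{..<L}"])
  ultimately show ?thesis by linarith
qed

lemma workload_queue_ge:
  "(\<Sum>t\<in>{1..T}. workload S (A t) m) - (\<Sum>t<T. \<Sum>l<L. real (\<Sum>s\<in>{1..S}. Nf l t m s))
     \<le> workload S (queue L A Nf T) m"
proof (induction T)
  case 0
  show ?case by (simp add: workload_def sum_nonneg)
next
  case (Suc T)
  then show ?case using workload_queue_Suc_ge[of S L A Nf T m] by simp
qed

lemma borel_measurable_queue:
  fixes A :: "nat \<Rightarrow> 'a \<Rightarrow> jobconf" and N :: "nat \<Rightarrow> nat \<Rightarrow> 'a \<Rightarrow> jobconf"
  assumes A_meas: "\<forall>t. A t \<in> measurable Mp (count_space UNIV)"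
    and N_meas: "\<forall>l<L. \<forall>t. N l t \<in> measurable Mp (count_space UNIV)"
  shows "(\<lambda>\<omega>. real (queue L (\<lambda>t. A t \<omega>) (\<lambda>l t. N l t \<omega>) t m s)) \<in> borel_measurable Mp"
proof (induction t arbitrary: s)
  have A: "(\<lambda>\<omega>. real (A t \<omega> m s)) \<in> borel_measurable Mp" for t s
    using measurable_compose[OF A_meas[rule_format] borel_measurable_count_space[of "\<lambda>f. real (f m s)"]]
    by simp
  have D: "(\<lambda>\<omega>. \<Sum>l<L. real (N l t \<omega> m s)) \<in> borel_measurable Mp" for t s
    using measurable_compose[OF N_meas[rule_format] borel_measurable_count_space[of "\<lambda>f. real (f m s)"]]
    by (simp add: borel_measurable_sum)
  {
    case 0
    show ?case using A by (cases "s = 0") simp_all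
  next
    case (Suc t)
    let ?q = "\<lambda>\<omega> s. real (queue L (\<lambda>t. A t \<omega>) (\<lambda>l t. N l t \<omega>) t m s)"
    let ?D = "\<lambda>\<omega> s. \<Sum>l<L. real (N l t \<omega> m s)"
    have eq: "real (queue L (\<lambda>t. A t \<omega>) (\<lambda>l t. N l t \<omega>) (Suc t) m s) = (if s = 0 then 0 else
        ?q \<omega> s - min (?q \<omega> s) (?D \<omega> s) + min (?q \<omega> (Suc s)) (?D \<omega> (Suc s)) + real (A (Suc t) \<omega> m s))"
      for \<omega> by (simp add: of_nat_min)
    have "(\<lambda>\<omega>. if s = 0 then 0 else ?q \<omega> s - min (?q \<omega> s) (?D \<omega> s)
        + min (?q \<omega> (Suc s)) (?D \<omega> (Suc s)) + real (A (Suc t) \<omega> m s)) \<in> borel_measurable Mp"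
      using Suc.IH A D
      by (cases "s = 0") (auto intro!: borel_measurable_add borel_measurable_diff borel_measurable_min)
    then show ?case by (simp only: eq)
  }
qed

lemma integrable_queue:
  fixes A :: "nat \<Rightarrow> 'a \<Rightarrow> jobconf" and N :: "nat \<Rightarrow> nat \<Rightarrow> 'a \<Rightarrow> jobconf"
  assumes "finite_measure Mp"
    and A_meas: "\<forall>t. A t \<in> measurable Mp (count_space UNIV)"
    and A_bound: "\<forall>t. \<forall>\<omega>\<in>space Mp. \<forall>m s. A t \<omega> m s \<le> Amax"
    and N_meas: "\<forall>l<L. \<forall>t. N l t \<in> measurable Mp (count_space UNIV)"
  shows "integrable Mp (\<lambda>\<omega>. real (queue L (\<lambda>t. A t \<omega>) (\<lambda>l t. N l t \<omega>) t m s))"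
proof (rule finite_measure.integrable_const_bound[OF assms(1)])
  show "AE \<omega> in Mp. norm (real (queue L (\<lambda>t. A t \<omega>) (\<lambda>l t. N l t \<omega>) t m s)) \<le> real (3 ^ t * Amax)"
  proof (rule AE_I2)
    fix \<omega> assume "\<omega> \<in> space Mp"
    then have "queue L (\<lambda>t. A t \<omega>) (\<lambda>l t. N l t \<omega>) t m s \<le> 3 ^ t * Amax"
      using A_bound by (intro queue_le_pow) auto
    then show "norm (real (queue L (\<lambda>t. A t \<omega>) (\<lambda>l t. N l t \<omega>) t m s)) \<le> real (3 ^ t * Amax)"
      by (simp only: real_norm_def abs_of_nat of_nat_le_iff)
  qed
qed (rule borel_measurable_queue[OF A_meas N_meas])

lemma expected_workload_le:
  fixes A :: "nat \<Rightarrow> 'a \<Rightarrow> jobconf" and N :: "nat \<Rightarrow> nat \<Rightarrow> 'a \<Rightarrow> jobconf" and T :: nat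
  assumes "finite_measure Mp"
    and A_meas: "\<forall>t. A t \<in> measurable Mp (count_space UNIV)"
    and A_bound: "\<forall>t. \<forall>\<omega>\<in>space Mp. \<forall>m s. A t \<omega> m s \<le> Amax"
    and N_meas: "\<forall>l<L. \<forall>t. N l t \<in> measurable Mp (count_space UNIV)"
    and "m < M"
  defines "q \<equiv> \<lambda>\<omega>. queue L (\<lambda>t. A t \<omega>) (\<lambda>l t. N l t \<omega>) T"
  shows "(\<integral>\<omega>. workload S (q \<omega>) m \<partial>Mp) \<le> real S * (\<Sum>m'<M. \<Sum>s\<in>{1..S}. \<integral>\<omega>. real (q \<omega> m' s) \<partial>Mp)"
proof -
  have q_int: "integrable Mp (\<lambda>\<omega>. real (q \<omega> m' s))" for m' s
    unfolding q_def by (rule integrable_queue[OF assms(1-4)])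
  have "workload S (q \<omega>) m \<le> real S * (\<Sum>m'<M. \<Sum>s\<in>{1..S}. real (q \<omega> m' s))" for \<omega>
  proof -
    have "workload S (q \<omega>) m \<le> (\<Sum>s\<in>{1..S}. real S * real (q \<omega> m s))"
      unfolding workload_def by (intro sum_mono mult_right_mono) auto
    also have "\<dots> \<le> real S * (\<Sum>m'<M. \<Sum>s\<in>{1..S}. real (q \<omega> m' s))"
      unfolding sum_distrib_left[symmetric] using \<open>m < M\<close>
      by (intro mult_left_mono member_le_sum[where f = "\<lambda>m'. \<Sum>s\<in>{1..S}. real (q \<omega> m' s)"])
         (auto intro: sum_nonneg)
    finally show ?thesis .
  qed
  then have "(\<integral>\<omega>. workload S (q \<omega>) m \<partial>Mp)
      \<le> (\<integral>\<omega>. real S * (\<Sum>m'<M. \<Sum>s\<in>{1..S}. real (q \<omega> m' s)) \<partial>Mp)"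
    using q_int unfolding workload_def
    by (intro integral_mono Bochner_Integration.integrable_sum integrable_mult_right) auto
  also have "\<dots> = real S * (\<Sum>m'<M. \<Sum>s\<in>{1..S}. \<integral>\<omega>. real (q \<omega> m' s) \<partial>Mp)"
    using q_int by (simp add: Bochner_Integration.integral_sum)
  finally show ?thesis .
qed

lemma expected_workload_ge:
  fixes A :: "nat \<Rightarrow> 'a \<Rightarrow> jobconf" and N :: "nat \<Rightarrow> nat \<Rightarrow> 'a \<Rightarrow> jobconf"
  assumes "finite_measure Mp"
    and A_meas: "\<forall>t. A t \<in> measurable Mp (count_space UNIV)"
    and A_bound: "\<forall>t. \<forall>\<omega>\<in>space Mp. \<forall>m s. A t \<omega> m s \<le> Amax"
    and N_meas: "\<forall>l<L. \<forall>t. N l t \<in> measurable Mp (count_space UNIV)"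
    and A_mean: "\<forall>t. \<forall>s\<in>{1..S}. (\<integral>\<omega>. real (A t \<omega> m s) \<partial>Mp) = lam m s"
    and cap_int: "\<forall>t. integrable Mp (\<lambda>\<omega>. \<Sum>l<L. real (\<Sum>s\<in>{1..S}. N l t \<omega> m s))"
  shows "real T * (\<Sum>s\<in>{1..S}. real s * lam m s)
           - (\<Sum>t<T. \<integral>\<omega>. (\<Sum>l<L. real (\<Sum>s\<in>{1..S}. N l t \<omega> m s)) \<partial>Mp)
         \<le> (\<integral>\<omega>. workload S (queue L (\<lambda>t. A t \<omega>) (\<lambda>l t. N l t \<omega>) T) m \<partial>Mp)"
proof -
  define cap where "cap t \<omega> = (\<Sum>l<L. real (\<Sum>s\<in>{1..S}. N l t \<omega> m s))" for t \<omega>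
  have A_int: "integrable Mp (\<lambda>\<omega>. real (A t \<omega> m s))" for t s
  proof (rule finite_measure.integrable_const_bound[OF assms(1), where B = "real Amax"])
    show "(\<lambda>\<omega>. real (A t \<omega> m s)) \<in> borel_measurable Mp"
      using measurable_compose[OF A_meas[rule_format] borel_measurable_count_space[of "\<lambda>f. real (f m s)"]]
      by simp
  qed (use A_bound in auto)
  have WA_int: "integrable Mp (\<lambda>\<omega>. workload S (A t \<omega>) m)" for t
    unfolding workload_def using A_int by (intro Bochner_Integration.integrable_sum integrable_mult_right)
  have E_arrivals: "(\<integral>\<omega>. workload S (A t \<omega>) m \<partial>Mp) = (\<Sum>s\<in>{1..S}. real s * lam m s)" for t
    using A_int A_mean by (simp add: workload_def Bochner_Integration.integral_sum)
  have "(\<integral>\<omega>. (\<Sum>t\<in>{1..T}. workload S (A t \<omega>) m) - (\<Sum>t<T. cap t \<omega>) \<partial>Mp)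
      \<le> (\<integral>\<omega>. workload S (queue L (\<lambda>t. A t \<omega>) (\<lambda>l t. N l t \<omega>) T) m \<partial>Mp)"
  proof (rule integral_mono)
    show "integrable Mp (\<lambda>\<omega>. (\<Sum>t\<in>{1..T}. workload S (A t \<omega>) m) - (\<Sum>t<T. cap t \<omega>))"
      using WA_int cap_int[folded cap_def]
      by (intro Bochner_Integration.integrable_diff Bochner_Integration.integrable_sum) auto
    show "integrable Mp (\<lambda>\<omega>. workload S (queue L (\<lambda>t. A t \<omega>) (\<lambda>l t. N l t \<omega>) T) m)"
      using integrable_queue[OF assms(1-4)] unfolding workload_def
      by (intro Bochner_Integration.integrable_sum integrable_mult_right)
    show "(\<Sum>t\<in>{1..T}. workload S (A t \<omega>) m) - (\<Sum>t<T. cap t \<omega>)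
        \<le> workload S (queue L (\<lambda>t. A t \<omega>) (\<lambda>l t. N l t \<omega>) T) m" for \<omega>
      using workload_queue_ge[where A = "\<lambda>t. A t \<omega>" and Nf = "\<lambda>l t. N l t \<omega>"] by (simp add: cap_def)
  qed
  also have "(\<integral>\<omega>. (\<Sum>t\<in>{1..T}. workload S (A t \<omega>) m) - (\<Sum>t<T. cap t \<omega>) \<partial>Mp)
      = real T * (\<Sum>s\<in>{1..S}. real s * lam m s) - (\<Sum>t<T. \<integral>\<omega>. cap t \<omega> \<partial>Mp)"
    using WA_int cap_int[folded cap_def]
    by (simp add: E_arrivals
                  Bochner_Integration.integral_sum)
  finally show ?thesis by (simp add: cap_def)
qed

lemma average_capacity_ge_load:
  fixes A :: "nat \<Rightarrow> 'a \<Rightarrow> jobconf" and N :: "nat \<Rightarrow> nat \<Rightarrow> 'a \<Rightarrow> jobconf"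
  assumes "finite_measure Mp"
    and A_meas: "\<forall>t. A t \<in> measurable Mp (count_space UNIV)"
    and A_bound: "\<forall>t. \<forall>\<omega>\<in>space Mp. \<forall>m s. A t \<omega> m s \<le> Amax"
    and N_meas: "\<forall>l<L. \<forall>t. N l t \<in> measurable Mp (count_space UNIV)"
    and A_mean: "\<forall>t. \<forall>s\<in>{1..S}. (\<integral>\<omega>. real (A t \<omega> m s) \<partial>Mp) = lam m s"
    and cap_int: "\<forall>t. integrable Mp (\<lambda>\<omega>. \<Sum>l<L. real (\<Sum>s\<in>{1..S}. N l t \<omega> m s))"
    and "m < M"
    and stable: "\<forall>t. (\<Sum>m'<M. \<Sum>s\<in>{1..S}.
                   \<integral>\<omega>. real (queue L (\<lambda>t. A t \<omega>) (\<lambda>l t. N l t \<omega>) t m' s) \<partial>Mp) \<le> B"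
  shows "(\<Sum>s\<in>{1..S}. real s * lam m s) - real S * B / (real T + 1)
    \<le> (\<Sum>t\<le>T. \<integral>\<omega>. (\<Sum>l<L. real (\<Sum>s\<in>{1..S}. N l t \<omega> m s)) \<partial>Mp) / (real T + 1)"
proof -
  let ?cap = "\<lambda>t. \<integral>\<omega>. (\<Sum>l<L. real (\<Sum>s\<in>{1..S}. N l t \<omega> m s)) \<partial>Mp"
  have "real (Suc T) * (\<Sum>s\<in>{1..S}. real s * lam m s) - (\<Sum>t<Suc T. ?cap t)
      \<le> (\<integral>\<omega>. workload S (queue L (\<lambda>t. A t \<omega>) (\<lambda>l t. N l t \<omega>) (Suc T)) m \<partial>Mp)"
    using assms(1-6) by (rule expected_workload_ge)
  also have "\<dots> \<le> real S * (\<Sum>m'<M. \<Sum>s\<in>{1..S}.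
      \<integral>\<omega>. real (queue L (\<lambda>t. A t \<omega>) (\<lambda>l t. N l t \<omega>) (Suc T) m' s) \<partial>Mp)"
    by (rule expected_workload_le[OF assms(1-4) \<open>m < M\<close>])
  also have "\<dots> \<le> real S * B"
    using stable by (intro mult_left_mono) (simp_all del: queue.simps)
  finally have "((real T + 1) * (\<Sum>s\<in>{1..S}. real s * lam m s) - real S * B) / (real T + 1)
      \<le> (\<Sum>t\<le>T. ?cap t) / (real T + 1)"
    by (intro divide_right_mono) (simp_all add: lessThan_Suc_atMost algebra_simps)
  then show ?thesis by (simp add: diff_divide_distrib)
qed

section \<open>Joint laws of consecutive configurations\<close>

locale finite_state_process = prob_space +
  fixes L :: nat and Ns :: "nat \<Rightarrow> 'b set" and X :: "nat \<Rightarrow> nat \<Rightarrow> 'a \<Rightarrow> 'b"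
  assumes finite_states: "l < L \<Longrightarrow> finite (Ns l)"
    and X_in_states: "l < L \<Longrightarrow> \<omega> \<in> space M \<Longrightarrow> X l t \<omega> \<in> Ns l"
    and X_measurable: "l < L \<Longrightarrow> X l t \<in> measurable M (count_space UNIV)"
begin

definition pair_prob :: "nat \<Rightarrow> nat \<Rightarrow> nat \<Rightarrow> 'b \<Rightarrow> 'b \<Rightarrow> real" where
  "pair_prob l t1 t2 x y = prob {\<omega>\<in>space M. X l t1 \<omega> = x \<and> X l t2 \<omega> = y}"

definition state_prob :: "nat \<Rightarrow> nat \<Rightarrow> 'b \<Rightarrow> real" where
  "state_prob l t x = prob {\<omega>\<in>space M. X l t \<omega> = x}"

lemma X_eq_in_events: "l < L \<Longrightarrow> {\<omega>\<in>space M. X l t \<omega> = x} \<in> events"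
  using measurable_sets[OF X_measurable[of l t], of "{x}"] by (simp add: vimage_def Int_def conj_commute)

lemma prob_eq_sum_states:
  assumes "l < L" and "{\<omega>\<in>space M. P \<omega>} \<in> events"
  shows "prob {\<omega>\<in>space M. P \<omega>} = (\<Sum>x\<in>Ns l. prob {\<omega>\<in>space M. P \<omega> \<and> X l t \<omega> = x})"
proof -
  have "prob {\<omega>\<in>space M. P \<omega>}
      = (\<Sum>x\<in>Ns l. prob ({\<omega>\<in>space M. P \<omega>} \<inter> {\<omega>\<in>space M. X l t \<omega> = x}))"
    using assms X_in_states finite_states X_eq_in_events by (intro measure_real_sum_image_fn) auto
  also have "\<dots> = (\<Sum>x\<in>Ns l. prob {\<omega>\<in>space M. P \<omega> \<and> X l t \<omega> = x})"
    by (intro sum.cong arg_cong[where f = prob]) auto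
  finally show ?thesis .
qed

lemma sum_pair_prob_right: "l < L \<Longrightarrow> (\<Sum>y\<in>Ns l. pair_prob l t1 t2 x y) = state_prob l t1 x"
  using prob_eq_sum_states[of l "\<lambda>\<omega>. X l t1 \<omega> = x" t2] X_eq_in_events
  by (simp add: pair_prob_def state_prob_def)

lemma sum_pair_prob_left: "l < L \<Longrightarrow> (\<Sum>x\<in>Ns l. pair_prob l t1 t2 x y) = state_prob l t2 y"
  using prob_eq_sum_states[of l "\<lambda>\<omega>. X l t2 \<omega> = y" t1] X_eq_in_events
  by (simp add: pair_prob_def state_prob_def conj_commute)

lemma sum_state_prob: "l < L \<Longrightarrow> (\<Sum>x\<in>Ns l. state_prob l t x) = 1"
  using prob_eq_sum_states[of l "\<lambda>_. True" t] by (simp add: state_prob_def prob_space)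

lemma
  assumes "l < L"
  shows integrable_pair: "integrable M (\<lambda>\<omega>. g (X l t1 \<omega>) (X l t2 \<omega>))"
    and integral_pair: "(\<integral>\<omega>. g (X l t1 \<omega>) (X l t2 \<omega>) \<partial>M)
      = (\<Sum>x\<in>Ns l. \<Sum>y\<in>Ns l. pair_prob l t1 t2 x y * g x y)"
proof -
  have events: "\<forall>p\<in>Ns l \<times> Ns l. {\<omega>\<in>space M. (X l t1 \<omega>, X l t2 \<omega>) = p} \<in> events"
    using X_eq_in_events[OF assms] by (auto simp: Collect_conj_eq[symmetric])
  have range: "\<forall>\<omega>\<in>space M. (X l t1 \<omega>, X l t2 \<omega>) \<in> Ns l \<times> Ns l"
    using X_in_states assms by auto
  note finite = finite_cartesian_product[OF finite_states finite_states, OF assms assms]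
  show "integrable M (\<lambda>\<omega>. g (X l t1 \<omega>) (X l t2 \<omega>))"
    using integral_finite_range(1)[OF finite range events, of "case_prod g"] by simp
  show "(\<integral>\<omega>. g (X l t1 \<omega>) (X l t2 \<omega>) \<partial>M) = (\<Sum>x\<in>Ns l. \<Sum>y\<in>Ns l. pair_prob l t1 t2 x y * g x y)"
    using integral_finite_range(2)[OF finite range events, of "case_prod g"]
    by (simp add: sum.cartesian_product pair_prob_def split_def prod_eq_iff)
qed

lemma
  shows integrable_sum_pair: "integrable M (\<lambda>\<omega>. \<Sum>l<L. g (X l t1 \<omega>) (X l t2 \<omega>))"
    and integral_sum_pair: "(\<integral>\<omega>. (\<Sum>l<L. g (X l t1 \<omega>) (X l t2 \<omega>)) \<partial>M)
      = (\<Sum>l<L. \<Sum>x\<in>Ns l. \<Sum>y\<in>Ns l. pair_prob l t1 t2 x y * g x y)"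
  using integrable_pair integral_pair by (auto simp: Bochner_Integration.integral_sum)

text \<open>Closing the cycle with the pair (X T, X 0) makes both marginals equal to the average of the
  laws of X 0, ..., X T.\<close>

definition cyclic_pairs :: "nat \<Rightarrow> nat \<Rightarrow> 'b \<Rightarrow> 'b \<Rightarrow> real" where
  "cyclic_pairs T l x y = (\<Sum>t\<le>T. pair_prob l (if t = 0 then T else t - 1) t x y) / (real T + 1)"

lemma cyclic_pairs_stationary: "stationary_pairs L Ns (cyclic_pairs T)"
  unfolding stationary_pairs_def
proof (intro allI impI conjI ballI)
  fix l assume l: "l < L"
  show "0 \<le> cyclic_pairs T l x y" for x y
    by (simp add: cyclic_pairs_def pair_prob_def sum_nonneg)
  have column: "(\<Sum>y\<in>Ns l. cyclic_pairs T l y x) = (\<Sum>t\<le>T. state_prob l t x) / (real T + 1)" for x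
    using l by (simp add: cyclic_pairs_def sum_divide_distrib[symmetric] sum.swap[where B = "{..T}"]
                          sum_pair_prob_left)
  have row: "(\<Sum>y\<in>Ns l. cyclic_pairs T l x y) = (\<Sum>t\<le>T. state_prob l t x) / (real T + 1)" for x
    using l by (simp add: cyclic_pairs_def sum_divide_distrib[symmetric] sum.swap[where B = "{..T}"]
                          sum_pair_prob_right sum_cyclic_pred[of "\<lambda>t. state_prob l t x"])
  show "(\<Sum>y\<in>Ns l. cyclic_pairs T l y x) = (\<Sum>y\<in>Ns l. cyclic_pairs T l x y)" for x
    unfolding column row ..
  show "(\<Sum>x\<in>Ns l. \<Sum>y\<in>Ns l. cyclic_pairs T l x y) = 1"
    using l by (simp add: row sum_divide_distrib[symmetric] sum.swap[where B = "{..T}"] sum_state_prob)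
qed

lemma sum_cyclic_pairs:
  "(\<Sum>l<L. \<Sum>x\<in>Ns l. \<Sum>y\<in>Ns l. cyclic_pairs T l x y * g x y)
    = (\<Sum>t\<le>T. \<integral>\<omega>. (\<Sum>l<L. g (X l (if t = 0 then T else t - 1) \<omega>) (X l t \<omega>)) \<partial>M) / (real T + 1)"
  by (simp add: integral_sum_pair cyclic_pairs_def sum_divide_distrib[symmetric] sum_distrib_right
                sum.swap[where B = "{..T}"])

lemma abs_integral_sum_pair_le:
  fixes g :: "'b \<Rightarrow> 'b \<Rightarrow> real"
  assumes "\<forall>l<L. \<forall>x\<in>Ns l. \<forall>y\<in>Ns l. 0 \<le> g x y"
  shows "\<bar>\<integral>\<omega>. (\<Sum>l<L. g (X l t1 \<omega>) (X l t2 \<omega>)) \<partial>M\<bar> \<le> (\<Sum>l<L. \<Sum>x\<in>Ns l. \<Sum>y\<in>Ns l. g x y)"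
proof -
  have "0 \<le> pair_prob l t1 t2 x y" "pair_prob l t1 t2 x y \<le> 1" for l x y
    by (simp_all add: pair_prob_def)
  then have "0 \<le> (\<Sum>l<L. \<Sum>x\<in>Ns l. \<Sum>y\<in>Ns l. pair_prob l t1 t2 x y * g x y)"
    and "(\<Sum>l<L. \<Sum>x\<in>Ns l. \<Sum>y\<in>Ns l. pair_prob l t1 t2 x y * g x y) \<le> (\<Sum>l<L. \<Sum>x\<in>Ns l. \<Sum>y\<in>Ns l. g x y)"
    using assms by (auto intro!: sum_nonneg sum_mono mult_left_le_one_le)
  then show ?thesis by (simp add: integral_sum_pair)
qed

lemma cyclic_pairs_cost_tendsto_0:
  fixes g :: "'b \<Rightarrow> 'b \<Rightarrow> real"
  assumes "\<forall>l<L. \<forall>x\<in>Ns l. \<forall>y\<in>Ns l. 0 \<le> g x y"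
  shows "(\<lambda>T. (\<Sum>l<L. \<Sum>x\<in>Ns l. \<Sum>y\<in>Ns l. cyclic_pairs T l x y * g x y)
           - 1 / real T * (\<Sum>t\<in>{1..T}. \<integral>\<omega>. (\<Sum>l<L. g (X l (t - 1) \<omega>) (X l t \<omega>)) \<partial>M)) \<longlonglongrightarrow> 0"
proof -
  have "(\<Sum>l<L. \<Sum>x\<in>Ns l. \<Sum>y\<in>Ns l. cyclic_pairs T l x y * g x y)
      = ((\<Sum>t\<in>{1..T}. \<integral>\<omega>. (\<Sum>l<L. g (X l (t - 1) \<omega>) (X l t \<omega>)) \<partial>M)
         + (\<integral>\<omega>. (\<Sum>l<L. g (X l T \<omega>) (X l 0 \<omega>)) \<partial>M)) / (real T + 1)" for T
    by (simp add: sum_cyclic_pairs sum.atMost_shift sum.atLeast1_atMost_eq add.commute)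
  then show ?thesis
    using average_with_extra_term_tendsto_0
      [OF abs_integral_sum_pair_le[OF assms] abs_integral_sum_pair_le[OF assms]]
    by simp
qed

lemma sum_cyclic_pairs_first:
  fixes f :: "'b \<Rightarrow> real"
  shows "(\<Sum>l<L. \<Sum>x\<in>Ns l. \<Sum>y\<in>Ns l. cyclic_pairs T l x y * f x)
    = (\<Sum>t\<le>T. \<integral>\<omega>. (\<Sum>l<L. f (X l t \<omega>)) \<partial>M) / (real T + 1)"
  using sum_cyclic_pairs[of T "\<lambda>x y. f x"]
    sum_cyclic_pred[of "\<lambda>t. \<integral>\<omega>. (\<Sum>l<L. f (X l t \<omega>)) \<partial>M" T]
  by simp

end

theorem lemma1:
  fixes Mp :: "'a measure"
    and L M K S :: nat
    and C :: "nat \<Rightarrow> nat \<Rightarrow> real" and R :: "nat \<Rightarrow> nat \<Rightarrow> real"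
    and c0 :: real and c :: "nat \<Rightarrow> real" and U V :: real
    and Amax :: nat and lam :: "nat \<Rightarrow> nat \<Rightarrow> real"
    and A :: "nat \<Rightarrow> 'a \<Rightarrow> jobconf"
    and N :: "nat \<Rightarrow> nat \<Rightarrow> 'a \<Rightarrow> jobconf"
  assumes "prob_space Mp"
    and C_nonneg: "\<forall>l<L. \<forall>k<K. 0 \<le> C l k"
    and R_nonneg: "\<forall>m<M. \<forall>k<K. 0 \<le> R m k"
    and R_pos: "\<forall>m<M. \<exists>k<K. 0 < R m k"
    and "0 \<le> c0" and "\<forall>m<M. 0 \<le> c m" and "0 \<le> U" and "0 \<le> V"
    and A_meas: "\<forall>t. A t \<in> measurable Mp (count_space UNIV)"
    and A_indep: "prob_space.indep_vars Mp (\<lambda>_. count_space UNIV) A UNIV"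
    and A_ident: "\<forall>t. distr Mp (count_space UNIV) (A t) = distr Mp (count_space UNIV) (A 0)"
    and A_support: "\<forall>t. \<forall>\<omega>\<in>space Mp. \<forall>m s. (M \<le> m \<or> s < 1 \<or> S < s) \<longrightarrow> A t \<omega> m s = 0"
    and A_bound: "\<forall>t. \<forall>\<omega>\<in>space Mp. \<forall>m s. A t \<omega> m s \<le> Amax"
    and A_mean: "\<forall>t. \<forall>m<M. \<forall>s\<in>{1..S}.
                   prob_space.expectation Mp (\<lambda>\<omega>. real (A t \<omega> m s)) = lam m s"
    and A_zero: "\<forall>t. \<forall>m<M. \<forall>s\<in>{1..S}. 0 < measure Mp {\<omega>\<in>space Mp. A t \<omega> m s = 0}"
    and lam_cap: "lam \<in> capacity_region L M S K R C"
    and N_meas: "\<forall>l<L. \<forall>t. N l t \<in> measurable Mp (count_space UNIV)"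
    and N_conf: "\<forall>l<L. \<forall>t. \<forall>\<omega>\<in>space Mp. N l t \<omega> \<in> Nset M S K R C l"
    and stable: "\<exists>q::real. (\<lambda>t. \<Sum>m<M. \<Sum>s\<in>{1..S}.
                   prob_space.expectation Mp
                     (\<lambda>\<omega>. real (queue L (\<lambda>t'. A t' \<omega>) (\<lambda>l t'. N l t' \<omega>) t m s)))
                 \<longlonglongrightarrow> q"
  shows "liminf (\<lambda>T. ereal ((1 / real T) * (\<Sum>t\<in>{1..T}.
            prob_space.expectation Mp (\<lambda>\<omega>. \<Sum>l<L.
               V * cost1 c0 c M S (N l t \<omega>) + U * cost2 M S (N l (t - 1) \<omega>) (N l t \<omega>)))))
         \<ge> ereal (Copt L M S K R C c0 c V U lam)"
proof -
  interpret prob_space Mp by fact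
  interpret process: finite_state_process Mp L "Nset M S K R C" N
    using finite_Nset[OF R_nonneg R_pos] N_conf N_meas by unfold_locales auto
  define pair_cost where "pair_cost x y = V * cost1 c0 c M S y + U * cost2 M S x y" for x y
  define h where "h t = (\<integral>\<omega>. (\<Sum>l<L. pair_cost (N l (t - 1) \<omega>) (N l t \<omega>)) \<partial>Mp)" for t
  define Bc where "Bc = (\<Sum>l<L. \<Sum>x\<in>Nset M S K R C l. \<Sum>y\<in>Nset M S K R C l. pair_cost x y)"
  have pair_cost_nonneg: "\<forall>l<L. \<forall>x\<in>Nset M S K R C l. \<forall>y\<in>Nset M S K R C l. 0 \<le> pair_cost x y"
    using cost1_nonneg[OF assms(5,6)] cost2_nonneg assms(7,8) by (simp add: pair_cost_def)
  have lam_nonneg: "\<forall>m<M. \<forall>s\<in>{1..S}. 0 \<le> lam m s"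
    using A_mean[THEN spec[of _ 0], rule_format, symmetric] by simp
  obtain B where B: "\<forall>t. (\<Sum>m<M. \<Sum>s\<in>{1..S}.
      \<integral>\<omega>. real (queue L (\<lambda>t'. A t' \<omega>) (\<lambda>l t'. N l t' \<omega>) t m s) \<partial>Mp) \<le> B"
    using stable by (auto simp: bdd_above_def dest!: convergentI convergent_imp_Bseq Bseq_bdd_above)
  have load: "\<forall>T. \<forall>m<M. (\<Sum>s\<in>{1..S}. real s * lam m s) - real S * B / (real T + 1)
      \<le> (\<Sum>l<L. \<Sum>x\<in>Nset M S K R C l. \<Sum>y\<in>Nset M S K R C l.
            process.cyclic_pairs T l x y * real (\<Sum>s\<in>{1..S}. x m s))"
    using average_capacity_ge_load[OF finite_measure_axioms A_meas A_bound N_meas _ _ _ B] A_mean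
      process.integrable_sum_pair[of "\<lambda>x y. real (\<Sum>s\<in>{1..S}. x m s)" for m]
    by (simp add: process.sum_cyclic_pairs_first)
  have "ereal (Copt L M S K R C c0 c V U lam) \<le> liminf (\<lambda>T. ereal (1 / real T * (\<Sum>t\<in>{1..T}. h t)))"
  proof (rule Copt_le_liminf[OF _ _ load])
    show "\<forall>l<L. finite (Nset M S K R C l)" using finite_Nset[OF R_nonneg R_pos] by blast
    show "\<forall>T. stationary_pairs L (Nset M S K R C) (process.cyclic_pairs T)"
      using process.cyclic_pairs_stationary by blast
    show "(\<lambda>T. real S * B / (real T + 1)) \<longlonglongrightarrow> 0"
      by (rule tendsto_divide_0[OF tendsto_const]) real_asymp
    show "(\<lambda>T. (\<Sum>l<L. \<Sum>x\<in>Nset M S K R C l. \<Sum>y\<in>Nset M S K R C l.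
        process.cyclic_pairs T l x y * (V * cost1 c0 c M S y + U * cost2 M S x y))
        - 1 / real T * (\<Sum>t\<in>{1..T}. h t)) \<longlonglongrightarrow> 0"
      using process.cyclic_pairs_cost_tendsto_0[OF pair_cost_nonneg] by (simp add: h_def pair_cost_def)
    show "\<forall>T. \<bar>1 / real T * (\<Sum>t\<in>{1..T}. h t)\<bar> \<le> Bc"
      using abs_average_le process.abs_integral_sum_pair_le[OF pair_cost_nonneg] by (simp add: h_def Bc_def)
  qed (use lam_nonneg assms(5-8) in auto)
  then show ?thesis by (simp add: h_def pair_cost_def)
qed

end
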